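(* Let $S$ be a positive integer and let $v\in\mathbb{R}^n$ be a vector with at least $S$ magnitudes. Let $p=(p_1,\dots,p_n)\in[1/3,2/3]^n$ and let $w=(w_1,\dots,w_n)\in\{\pm1\}^n$ be a random vector with independent entries, where $\Pr[w_i=1]=p_i$ and $\Pr[w_i=-1]=1-p_i$ for each $i\in[n]$. Then for every $\alpha\in\mathbb{R}$, \[\Pr\big[\langle v,w\rangle=\alpha\big]\le\left(\tfrac{2}{3}\right)^{\lceil S/2\rceil}.\]
   Context: A non-zero real number $x$ has magnitude $j\in\mathbb{Z}$ if $10^j\le|x|<10^{j+1}$. A vector $v$ has at least $S$ magnitudes if there exist $S$ non-zero entries of $v$ with pairwise distinct magnitudes. *)

theory Defs
  imports "HOL-Probability.Probability"
begin

definition has_magnitude :: "real \<Rightarrow> int \<Rightarrow> bool" where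
  "has_magnitude x j \<longleftrightarrow> x \<noteq> 0 \<and> (10::real) powi j \<le> \<bar>x\<bar> \<and> \<bar>x\<bar> < (10::real) powi (j + 1)"

definition at_least_magnitudes :: "nat \<Rightarrow> (nat \<Rightarrow> real) \<Rightarrow> nat \<Rightarrow> bool" where
  "at_least_magnitudes n v S \<longleftrightarrow>
     (\<exists>I m. I \<subseteq> {..<n} \<and> card I = S \<and> (\<forall>i\<in>I. v i \<noteq> 0 \<and> has_magnitude (v i) (m i))
            \<and> inj_on m I)"

text \<open>Distribution of a random sign vector w in {+1,-1}^n with independent entries,
  P[w i = 1] = p i, P[w i = -1] = 1 - p i (entries outside {..<n} are fixed to 0).\<close>
definition sign_vector_pmf :: "nat \<Rightarrow> (nat \<Rightarrow> real) \<Rightarrow> (nat \<Rightarrow> real) pmf" where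
  "sign_vector_pmf n p =
     Pi_pmf {..<n} 0 (\<lambda>i. map_pmf (\<lambda>b. if b then 1 else -1) (bernoulli_pmf (p i)))"

end

theory Submission
  imports Defs
begin

text \<open>Among \<open>S\<close> entries of pairwise distinct magnitudes, at least \<open>\<lceil>S/2\<rceil>\<close> have magnitudes of
  the same parity, hence pairwise differing by at least 2. On such a set \<open>J\<close> every entry exceeds
  twice the sum of the absolute values of the entries of smaller magnitude, so the signs \<open>w\<^sub>j\<close>,
  \<open>j \<in> J\<close>, are determined by \<open>\<langle>v, w\<rangle>\<close> and the remaining coordinates. Conditioning on the latter,
  the event \<open>\<langle>v, w\<rangle> = \<alpha>\<close> fixes every \<open>w\<^sub>j\<close>, each of which has probability at most \<open>2/3\<close>.\<close>

lemma measure_bind_pmf_finite_support: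
  assumes "finite A" "set_pmf Q \<subseteq> A"
  shows "measure_pmf.prob (bind_pmf Q N) E = (\<Sum>y\<in>A. pmf Q y * measure_pmf.prob (N y) E)"
proof -
  have "emeasure (measure_pmf (bind_pmf Q N)) E = (\<Sum>y\<in>A. emeasure (measure_pmf (N y)) E * pmf Q y)"
    unfolding emeasure_bind_pmf
    by (rule nn_integral_measure_pmf_support) (use assms in \<open>auto simp: set_pmf_eq\<close>)
  also have "\<dots> = ennreal (\<Sum>y\<in>A. pmf Q y * measure_pmf.prob (N y) E)"
    by (simp add: measure_pmf.emeasure_eq_measure sum_ennreal[symmetric] ennreal_mult' mult.commute)
  finally show ?thesis
    by (simp add: measure_pmf.emeasure_eq_measure sum_nonneg)
qed

lemma disjoint_family_on_fun_upd_slices: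
  assumes "\<And>f g. f \<in> E \<Longrightarrow> g \<in> E \<Longrightarrow> (\<And>i. i \<notin> J \<Longrightarrow> f i = g i) \<Longrightarrow> f = g" "x \<in> J"
  shows "disjoint_family_on (\<lambda>y. {f. f(x := y) \<in> E}) Y"
  unfolding disjoint_family_on_def
proof (intro ballI impI equals0I)
  fix y y' f assume "y \<noteq> y'" "f \<in> {f. f(x := y) \<in> E} \<inter> {f. f(x := y') \<in> E}"
  then have "f(x := y) = f(x := y')" using assms by (intro assms(1)) auto
  with \<open>y \<noteq> y'\<close> show False by (metis fun_upd_same)
qed

text \<open>Splitting off a coordinate \<open>x \<in> J\<close> cuts \<open>E\<close> into the slices \<open>{f. f(x := y) \<in> E}\<close>, which are
  disjoint by the last hypothesis and whose union again satisfies it for \<open>J - {x}\<close>.\<close>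

lemma prob_Pi_pmf_le_pow_card:
  fixes q :: "'i \<Rightarrow> 'a pmf" and E :: "('i \<Rightarrow> 'a) set"
  assumes "finite A" "J \<subseteq> A"
    and "\<And>i. i \<in> J \<Longrightarrow> finite (set_pmf (q i))"
    and "\<And>i y. i \<in> J \<Longrightarrow> pmf (q i) y \<le> c"
    and "\<And>f g. f \<in> E \<Longrightarrow> g \<in> E \<Longrightarrow> (\<And>i. i \<notin> J \<Longrightarrow> f i = g i) \<Longrightarrow> f = g"
  shows "measure_pmf.prob (Pi_pmf A d q) E \<le> c ^ card J"
proof -
  have "finite J" using assms(1,2) finite_subset by blast
  then show ?thesis using assms
  proof (induction J arbitrary: A E rule: finite_induct)
    case empty
    then show ?case by (simp add: measure_pmf.prob_le_1)
  next
    case (insert x J)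
    define A' where "A' = A - {x}"
    have A: "A = insert x A'" "x \<notin> A'" "finite A'" "J \<subseteq> A'"
      using insert.prems(1,2) insert.hyps(2) unfolding A'_def by auto
    define Y where "Y = set_pmf (q x)"
    define F where "F = (\<lambda>y. {f. f(x := y) \<in> E})"
    have "finite Y" unfolding Y_def by (simp add: insert.prems(3))
    have c_nonneg: "0 \<le> c" using insert.prems(4)[of x] pmf_nonneg by (meson insertI1 order.trans)
    have F_disjoint: "disjoint_family_on F Y"
      unfolding F_def by (rule disjoint_family_on_fun_upd_slices[of E "insert x J", OF insert.prems(5)]) simp_all
    have "measure_pmf.prob (Pi_pmf A d q) E
        = measure_pmf.prob (q x \<bind> (\<lambda>y. Pi_pmf A' d q \<bind> (\<lambda>f. return_pmf (f(x := y))))) E"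
      using A by (simp add: Pi_pmf_insert')
    also have "\<dots> = (\<Sum>y\<in>Y. pmf (q x) y * measure_pmf.prob (Pi_pmf A' d q) (F y))"
      by (subst measure_bind_pmf_finite_support[OF \<open>finite Y\<close>])
         (simp_all add: Y_def F_def map_pmf_def[symmetric] vimage_def)
    also have "\<dots> \<le> (\<Sum>y\<in>Y. c * measure_pmf.prob (Pi_pmf A' d q) (F y))"
      by (intro sum_mono mult_right_mono insert.prems(4)) auto
    also have "\<dots> = c * measure_pmf.prob (Pi_pmf A' d q) (\<Union>y\<in>Y. F y)"
      by (simp add: sum_distrib_left measure_pmf.finite_measure_finite_Union[OF \<open>finite Y\<close> _ F_disjoint])
    also have "\<dots> \<le> c * c ^ card J"
    proof (intro mult_left_mono c_nonneg insert.IH)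
      fix f g assume "f \<in> (\<Union>y\<in>Y. F y)" "g \<in> (\<Union>y\<in>Y. F y)" and agree: "\<And>i. i \<notin> J \<Longrightarrow> f i = g i"
      then obtain y y' where "f(x := y) \<in> E" "g(x := y') \<in> E" unfolding F_def by auto
      then have "f(x := y) = g(x := y')" by (rule insert.prems(5)) (auto simp: agree)
      moreover have "f x = g x" using agree insert.hyps(2) by blast
      ultimately show "f = g" by (metis fun_upd_triv fun_upd_upd)
    qed (use A insert.prems in auto)
    also have "\<dots> = c ^ card (insert x J)" using insert.hyps by simp
    finally show ?case .
  qed
qed

lemma pmf_bernoulli_sign_le:
  assumes "0 \<le> a" "a \<le> 1"
  shows "pmf (map_pmf (\<lambda>b. if b then 1 else -1) (bernoulli_pmf a)) (y::real) \<le> max a (1 - a)"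
proof -
  let ?sign = "\<lambda>b. if b then 1 else -1::real"
  consider "y = 1" | "y = -1" | "y \<notin> {1, -1}" by blast
  then show ?thesis
  proof cases
    case 1
    then have "?sign -` {y} = {True}" by (auto split: if_splits)
    then show ?thesis using assms by (simp add: pmf_map measure_pmf_single)
  next
    case 2
    then have "?sign -` {y} = {False}" by (auto split: if_splits)
    then show ?thesis using assms by (simp add: pmf_map measure_pmf_single)
  next
    case 3
    then have "y \<notin> set_pmf (map_pmf ?sign (bernoulli_pmf a))" by auto
    then show ?thesis by (simp add: set_pmf_eq)
  qed
qed

text \<open>Distinct magnitudes of equal parity differ by at least 2, so the sum is bounded by
  a geometric series of ratio \<open>1/100\<close>.\<close>

lemma sum_abs_le_sparse_magnitudes:
  fixes v :: "'a \<Rightarrow> real" and m :: "'a \<Rightarrow> int"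
  assumes "finite K" "\<And>k. k \<in> K \<Longrightarrow> has_magnitude (v k) (m k)" "inj_on m K"
    and "\<And>k. k \<in> K \<Longrightarrow> m k \<le> M" "\<And>k. k \<in> K \<Longrightarrow> m k mod 2 = r"
  shows "(\<Sum>k\<in>K. \<bar>v k\<bar>) \<le> 2 * 10 powi (M + 1)"
  using assms
proof (induction K arbitrary: M rule: finite_ranking_induct[where f=m])
  case empty
  then show ?case by simp
next
  case (insert x K)
  show ?case
  proof (cases "x \<in> K")
    case True
    then show ?thesis using insert by (simp add: insert_absorb)
  next
    case False
    define t :: real where "t = 10 powi (m x - 1)"
    have "t > 0" unfolding t_def by simp
    have "(10::real) powi (m x + 1) = 10 powi (m x - 1 + 2)"
      by (rule arg_cong[where f = "\<lambda>k. 10 powi k"]) simp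
    also have "\<dots> = 100 * t" unfolding t_def by (subst power_int_add) simp_all
    finally have top: "10 powi (m x + 1) = 100 * t" .
    have "\<forall>k\<in>K. m k \<le> m x - 2"
    proof
      fix k assume k: "k \<in> K"
      have "m k \<noteq> m x" using insert.prems(2) k False by (metis inj_on_contraD insertCI)
      moreover have "m k mod 2 = r" "m x mod 2 = r" using insert.prems(4) k by auto
      ultimately show "m k \<le> m x - 2" using insert.hyps(2)[OF k] by presburger
    qed
    then have "(\<Sum>k\<in>K. \<bar>v k\<bar>) \<le> 2 * 10 powi (m x - 2 + 1)"
      using insert.prems inj_on_subset[OF insert.prems(2) subset_insertI] by (intro insert.IH) auto
    also have "(10::real) powi (m x - 2 + 1) = t" unfolding t_def by (simp add: algebra_simps)
    finally have rest: "(\<Sum>k\<in>K. \<bar>v k\<bar>) \<le> 2 * t" .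
    have "\<bar>v x\<bar> < 100 * t" using insert.prems(1)[of x] top by (simp add: has_magnitude_def)
    have "(\<Sum>k\<in>insert x K. \<bar>v k\<bar>) = \<bar>v x\<bar> + (\<Sum>k\<in>K. \<bar>v k\<bar>)"
      using False insert.hyps(1) by simp
    also have "\<dots> \<le> 2 * (100 * t)" using rest \<open>\<bar>v x\<bar> < 100 * t\<close> \<open>t > 0\<close> by simp
    also have "100 * t \<le> 10 powi (M + 1)"
      unfolding top[symmetric] by (rule power_int_increasing) (use insert.prems(3) in auto)
    finally show ?thesis by simp
  qed
qed

lemma largest_magnitude_dominates:
  fixes v :: "'a \<Rightarrow> real" and m :: "'a \<Rightarrow> int"
  assumes "finite K" "\<And>k. k \<in> K \<Longrightarrow> has_magnitude (v k) (m k)" "inj_on m K"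
    and "\<And>k. k \<in> K \<Longrightarrow> m k mod 2 = r"
    and "j \<in> K" "\<And>k. k \<in> K \<Longrightarrow> m k \<le> m j"
  shows "2 * (\<Sum>k\<in>K - {j}. \<bar>v k\<bar>) < \<bar>v j\<bar>"
proof -
  have "\<forall>k\<in>K - {j}. m k \<le> m j - 2"
  proof
    fix k assume k: "k \<in> K - {j}"
    have "m k \<noteq> m j" using assms(3,5) k by (metis DiffE inj_on_contraD singletonI)
    moreover have "m k mod 2 = r" "m j mod 2 = r" using assms(4,5) k by auto
    moreover have "m k \<le> m j" using assms(6) k by blast
    ultimately show "m k \<le> m j - 2" by presburger
  qed
  then have "(\<Sum>k\<in>K - {j}. \<bar>v k\<bar>) \<le> 2 * 10 powi (m j - 2 + 1)"
    using assms inj_on_subset[OF assms(3) Diff_subset]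
    by (intro sum_abs_le_sparse_magnitudes[where r = r]) auto
  moreover have "(10::real) powi m j = 10 * 10 powi (m j - 2 + 1)"
    by (simp flip: power_int_add_1')
  moreover have "10 powi m j \<le> \<bar>v j\<bar>" using assms(2,5) by (simp add: has_magnitude_def)
  moreover have "(0::real) < 10 powi (m j - 2 + 1)" by simp
  ultimately show ?thesis by linarith
qed

lemma sign_sum_inj_on_sparse_magnitudes:
  fixes v :: "'a \<Rightarrow> real" and m :: "'a \<Rightarrow> int"
  assumes "finite J" "\<And>j. j \<in> J \<Longrightarrow> has_magnitude (v j) (m j)" "inj_on m J"
    and "\<And>j. j \<in> J \<Longrightarrow> m j mod 2 = r"
    and "\<And>j. j \<in> J \<Longrightarrow> f j \<in> {1, -1} \<and> g j \<in> {1, -1}"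
    and "(\<Sum>j\<in>J. v j * f j) = (\<Sum>j\<in>J. v j * g j)"
  shows "\<forall>j\<in>J. f j = g j"
proof (rule ccontr)
  assume "\<not> (\<forall>j\<in>J. f j = g j)"
  define D where "D = {j\<in>J. f j \<noteq> g j}"
  have "D \<subseteq> J" "finite D" "D \<noteq> {}"
    using assms(1) \<open>\<not> (\<forall>j\<in>J. f j = g j)\<close> unfolding D_def by auto
  then obtain j where j: "j \<in> D" "Max (m ` D) = m j" by (meson obtains_MAX)
  define d where "d = (\<lambda>i. v i * (f i - g i))"
  have "(\<Sum>i\<in>D. d i) = (\<Sum>i\<in>J. d i)"
    by (rule sum.mono_neutral_left) (use assms(1) in \<open>auto simp: D_def d_def\<close>)
  also have "\<dots> = 0" using assms(6) by (simp add: d_def algebra_simps sum_subtractf)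
  finally have "d j = - (\<Sum>i\<in>D - {j}. d i)" using j(1) \<open>finite D\<close> by (simp add: sum.remove)
  then have "2 * \<bar>v j\<bar> \<le> (\<Sum>i\<in>D - {j}. \<bar>d i\<bar>)"
    using j(1) assms(5)[of j] \<open>D \<subseteq> J\<close> sum_abs[of d "D - {j}"]
    by (auto simp: D_def d_def abs_mult)
  also have "\<dots> \<le> (\<Sum>i\<in>D - {j}. 2 * \<bar>v i\<bar>)"
  proof (rule sum_mono)
    fix i assume "i \<in> D - {j}"
    then have "\<bar>f i - g i\<bar> \<le> 2" using assms(5)[of i] \<open>D \<subseteq> J\<close> by fastforce
    then show "\<bar>d i\<bar> \<le> 2 * \<bar>v i\<bar>" by (simp add: d_def abs_mult mult_left_mono mult.commute)
  qed
  also have "\<dots> = 2 * (\<Sum>i\<in>D - {j}. \<bar>v i\<bar>)" by (simp add: sum_distrib_left)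
  also have "\<dots> < \<bar>v j\<bar>"
  proof (rule largest_magnitude_dominates[where m = m and r = r])
    show "m k \<le> m j" if "k \<in> D" for k
      using that j(2) \<open>finite D\<close> by (metis Max_ge finite_imageI imageI)
  qed (use \<open>finite D\<close> \<open>D \<subseteq> J\<close> j(1) assms(2,4) inj_on_subset[OF assms(3)] in auto)
  finally show False by simp
qed

lemma obtain_parity_class_of_half_card:
  fixes m :: "'a \<Rightarrow> int"
  assumes "finite I"
  obtains r where "card I \<le> 2 * card {i\<in>I. m i mod 2 = r}"
proof -
  have "card I = card ({i\<in>I. m i mod 2 = 0} \<union> {i\<in>I. m i mod 2 = 1})"
    by (rule arg_cong[where f = card]) auto
  also have "\<dots> = card {i\<in>I. m i mod 2 = 0} + card {i\<in>I. m i mod 2 = 1}"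
    by (rule card_Un_disjoint) (use assms in auto)
  finally have "card I \<le> 2 * card {i\<in>I. m i mod 2 = 0} \<or> card I \<le> 2 * card {i\<in>I. m i mod 2 = 1}"
    by linarith
  then show ?thesis using that by blast
qed

lemma prob_sign_sum_eq_le_pow_card:
  fixes v p :: "nat \<Rightarrow> real" and m :: "nat \<Rightarrow> int"
  assumes "J \<subseteq> {..<n}" "\<And>j. j \<in> J \<Longrightarrow> has_magnitude (v j) (m j)" "inj_on m J"
    and "\<And>j. j \<in> J \<Longrightarrow> m j mod 2 = r" "\<And>j. j \<in> J \<Longrightarrow> p j \<in> {1/3..2/3}"
  shows "measure_pmf.prob (sign_vector_pmf n p) {w. (\<Sum>i<n. v i * w i) = \<alpha>} \<le> (2/3) ^ card J"
proof -
  define q where "q = (\<lambda>i. map_pmf (\<lambda>b. if b then 1 else -1::real) (bernoulli_pmf (p i)))"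
  let ?W = "Pi_pmf {..<n} 0 q"
  define E where "E = {w. (\<Sum>i<n. v i * w i) = \<alpha>} \<inter> set_pmf ?W"
  have "finite J" using assms(1) finite_subset by blast
  have "measure_pmf.prob (sign_vector_pmf n p) {w. (\<Sum>i<n. v i * w i) = \<alpha>} = measure_pmf.prob ?W E"
    unfolding sign_vector_pmf_def q_def E_def by (simp add: measure_Int_set_pmf)
  also have "\<dots> \<le> (2/3) ^ card J"
  proof (rule prob_Pi_pmf_le_pow_card[OF _ assms(1)])
    fix i y assume "i \<in> J"
    then have "p i \<in> {1/3..2/3}" by (rule assms(5))
    then show "pmf (q i) y \<le> 2/3" unfolding q_def using pmf_bernoulli_sign_le[of "p i" y] by auto
  next
    fix f g assume "f \<in> E" "g \<in> E" and agree: "\<And>i. i \<notin> J \<Longrightarrow> f i = g i"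
    have signs: "f j \<in> {1, -1} \<and> g j \<in> {1, -1}" if "j \<in> J" for j
      using \<open>f \<in> E\<close> \<open>g \<in> E\<close> that assms(1) by (auto simp: E_def set_Pi_pmf PiE_dflt_def q_def)
    have split: "(\<Sum>i<n. v i * h i) = (\<Sum>j\<in>J. v j * h j) + (\<Sum>i\<in>{..<n} - J. v i * h i)" for h
      using assms(1) by (simp add: sum.subset_diff)
    have "(\<Sum>j\<in>J. v j * f j) = (\<Sum>j\<in>J. v j * g j)"
      using \<open>f \<in> E\<close> \<open>g \<in> E\<close> split[of f] split[of g] agree by (simp add: E_def)
    then have "\<forall>j\<in>J. f j = g j"
      using \<open>finite J\<close> assms(2-4) signs by (intro sign_sum_inj_on_sparse_magnitudes[where m = m and r = r])
    with agree show "f = g" by blast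
  qed (simp_all add: q_def)
  finally show ?thesis .
qed

theorem mainTheorem3:
  fixes n S :: nat and v p :: "nat \<Rightarrow> real" and \<alpha> :: real
  assumes "S > 0"
    and "at_least_magnitudes n v S"
    and "\<And>i. i < n \<Longrightarrow> p i \<in> {1/3..2/3}"
  shows "measure_pmf.prob (sign_vector_pmf n p) {w. (\<Sum>i<n. v i * w i) = \<alpha>}
           \<le> (2/3::real) ^ nat \<lceil>real S / 2\<rceil>"
proof -
  obtain I m where I: "I \<subseteq> {..<n}" "card I = S" "\<forall>i\<in>I. has_magnitude (v i) (m i)" "inj_on m I"
    using assms(2) unfolding at_least_magnitudes_def by blast
  then have "finite I" using finite_subset by blast
  then obtain r where r: "card I \<le> 2 * card {i\<in>I. m i mod 2 = r}"
    by (rule obtain_parity_class_of_half_card)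
  define J where "J = {i\<in>I. m i mod 2 = r}"
  have "J \<subseteq> I" by (simp add: J_def)
  then have "measure_pmf.prob (sign_vector_pmf n p) {w. (\<Sum>i<n. v i * w i) = \<alpha>} \<le> (2/3) ^ card J"
    using I assms(3) inj_on_subset[OF I(4)]
    by (intro prob_sign_sum_eq_le_pow_card[where m = m and r = r]) (auto simp: J_def)
  also have "\<dots> \<le> (2/3) ^ nat \<lceil>real S / 2\<rceil>"
    using r I(2) by (intro power_decreasing) (simp_all add: J_def ceiling_le_iff nat_le_iff)
  finally show ?thesis .
qed

end
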